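(* For any integer $d\geqslant 2$ and any $1/2<\alpha<1$, the Hausdorff dimension of ${\mathcal E}_{d,\alpha}$ satisfies $\dim{\mathcal E}_{d,\alpha}<d$.
   Context: Let $\mathsf{T}_d=(\mathbb{R}/\mathbb{Z})^d$, identified with $[0,1)^d$, and write $\mathbf{e}(x)=\exp(2\pi i x)$. For $\mathbf x=(x_1,\ldots,x_d)\in\mathsf{T}_d$ and $N\in\mathbb{N}$ define $S_d(\mathbf x;N)=\sum_{n=1}^{N}\mathbf{e}(x_1n+\ldots+x_dn^d)$. For $0<\alpha<1$ define ${\mathcal E}_{d,\alpha}=\{\mathbf x\in\mathsf{T}_d:\ |S_d(\mathbf x;N)|\geqslant N^{\alpha}\text{ for infinitely many }N\in\mathbb{N}\}$. *)

theory Defs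
  imports "HOL-Analysis.Analysis"
begin

text \<open>Points of the torus T_d, identified with [0,1)^d, are represented as functions
  nat => real whose coordinates 1..d lie in [0,1) and which vanish elsewhere.\<close>

definition torus :: "nat \<Rightarrow> (nat \<Rightarrow> real) set" where
  "torus d = {x. (\<forall>i\<in>{1..d}. 0 \<le> x i \<and> x i < 1) \<and> (\<forall>i. i \<notin> {1..d} \<longrightarrow> x i = 0)}"

definition e :: "real \<Rightarrow> complex" where
  "e t = exp (2 * of_real pi * \<i> * of_real t)"

definition weyl_sum :: "nat \<Rightarrow> (nat \<Rightarrow> real) \<Rightarrow> nat \<Rightarrow> complex" where
  "weyl_sum d x N = (\<Sum>n=1..N. e (\<Sum>k=1..d. x k * real n ^ k))"

definition E_set :: "nat \<Rightarrow> real \<Rightarrow> (nat \<Rightarrow> real) set" where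
  "E_set d \<alpha> = {x \<in> torus d. infinite {N::nat. N \<ge> 1 \<and> norm (weyl_sum d x N) \<ge> real N powr \<alpha>}}"

definition euc_dist :: "nat \<Rightarrow> (nat \<Rightarrow> real) \<Rightarrow> (nat \<Rightarrow> real) \<Rightarrow> real" where
  "euc_dist d x y = sqrt (\<Sum>i=1..d. (x i - y i)^2)"

definition bounded_wrt :: "('a \<Rightarrow> 'a \<Rightarrow> real) \<Rightarrow> 'a set \<Rightarrow> bool" where
  "bounded_wrt dd A = (\<exists>B. \<forall>x\<in>A. \<forall>y\<in>A. dd x y \<le> B)"

definition diam_wrt :: "('a \<Rightarrow> 'a \<Rightarrow> real) \<Rightarrow> 'a set \<Rightarrow> real" where
  "diam_wrt dd A = (if A = {} then 0 else Sup {dd x y | x y. x \<in> A \<and> y \<in> A})"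

definition haus_term :: "('a \<Rightarrow> 'a \<Rightarrow> real) \<Rightarrow> real \<Rightarrow> 'a set \<Rightarrow> ennreal" where
  "haus_term dd s C = (if C = {} then 0 else if s = 0 then 1 else ennreal (diam_wrt dd C powr s))"

definition hausdorff_pre :: "('a \<Rightarrow> 'a \<Rightarrow> real) \<Rightarrow> real \<Rightarrow> real \<Rightarrow> 'a set \<Rightarrow> ennreal" where
  "hausdorff_pre dd s \<delta> A =
     (INF C \<in> {C :: nat \<Rightarrow> 'a set. A \<subseteq> (\<Union>i. C i) \<and>
                 (\<forall>i. bounded_wrt dd (C i) \<and> diam_wrt dd (C i) \<le> \<delta>)}.
        (\<Sum>i. haus_term dd s (C i)))"

definition hausdorff_measure :: "('a \<Rightarrow> 'a \<Rightarrow> real) \<Rightarrow> real \<Rightarrow> 'a set \<Rightarrow> ennreal" where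
  "hausdorff_measure dd s A = (SUP \<delta> \<in> {0<..}. hausdorff_pre dd s \<delta> A)"

definition hausdorff_dim :: "('a \<Rightarrow> 'a \<Rightarrow> real) \<Rightarrow> 'a set \<Rightarrow> ereal" where
  "hausdorff_dim dd A = Inf {ereal s | s. s \<ge> 0 \<and> hausdorff_measure dd s A = 0}"

end

theory Submission
  imports Defs "HOL-Real_Asymp.Real_Asymp"
begin

text \<open>
  Let |S_d(x;N)| \<ge> N^\<alpha> with 2^(J-1) < N \<le> 2^J. Splitting [1, N] into at most J + 1 dyadic
  blocks (a 2^l, (a+1) 2^l] shows that some block sum is at least 2 \<mu>_J = 2^((J-1)\<alpha>) / (J+1).
  With Q_J = 2^((d+2)J) a block sum moves by at most 2\<pi>d / 2^J when x moves by 1/Q_J in each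
  coordinate, so the same block is still at least \<mu>_J at the point g/Q_J of the grid next to x.
  Averaged over the grid points g/Q, the exponentials e(P_(g/Q)(n)), n < Q, are orthonormal, so by
  Parseval and Chebyshev at most (J+1) 2^J Q_J^d / \<mu>_J^2 grid points are bad. Covering E_{d,\<alpha>}
  by the cells of the bad grid points of all scales J \<ge> J0 costs \<Sum>_J poly(J) 2^(-(\<alpha>-1/2)J) in
  the s-dimensional Hausdorff sum for s = d - (\<alpha>-1/2)/(d+2); letting J0 grow gives
  H^s(E_{d,\<alpha>}) = 0, so dim E_{d,\<alpha>} \<le> s < d.
\<close>

section \<open>Exponential sums over a grid\<close>

lemma e_add: "e (a + b) = e a * e b"
  unfolding e_def by (simp add: distrib_left exp_add)

lemma e_sum: "finite A \<Longrightarrow> e (\<Sum>k\<in>A. f k) = (\<Prod>k\<in>A. e (f k))"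
  unfolding e_def by (simp add: sum_distrib_left exp_sum)

lemma cnj_e: "cnj (e t) = e (- t)"
  unfolding e_def by (simp add: exp_cnj)

lemma norm_e [simp]: "norm (e t) = 1"
  unfolding e_def by simp

lemma e_of_int [simp]: "e (of_int k) = 1"
  unfolding e_def exp_eq_1 by (auto intro!: exI[of _ k])

lemma e_0 [simp]: "e 0 = 1"
  using e_of_int[of 0] by simp

lemma e_eq_1_imp_Ints: "e t = 1 \<Longrightarrow> t \<in> \<int>"
  unfolding e_def exp_eq_1 by (auto simp: Ints_def)

lemma e_power: "e t ^ n = e (real n * t)"
  unfolding e_def by (simp add: exp_of_nat_mult[symmetric] mult_ac)

lemma norm_cis_minus_1_le: "norm (cis x - 1) \<le> \<bar>x\<bar>"
proof -
  have "(norm (cis x - 1))^2 = (cos x - 1)^2 + (sin x)^2"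
    by (simp add: cmod_def)
  also have "\<dots> = (2 * sin (x/2))^2"
    using cos_double_sin[of "x/2"] by (simp add: power2_eq_square algebra_simps sin_squared_eq)
  also have "\<dots> \<le> x^2"
  proof -
    have "\<bar>2 * sin (x/2)\<bar> \<le> \<bar>x\<bar>" using abs_sin_x_le_abs_x[of "x/2"] by simp
    then show ?thesis by (metis abs_le_square_iff power2_abs)
  qed
  finally show ?thesis by (metis abs_le_square_iff abs_norm_cancel)
qed

lemma norm_e_diff_le: "norm (e a - e b) \<le> 2 * pi * \<bar>a - b\<bar>"
proof -
  have "e a - e b = e b * (cis (2 * pi * (a - b)) - 1)"
    using e_add[of b "a - b"] unfolding e_def cis_conv_exp by (simp add: algebra_simps)
  then show ?thesis
    using norm_cis_minus_1_le[of "2 * pi * (a - b)"] by (simp add: norm_mult abs_mult)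
qed

lemma sum_e_multiples_eq_0:
  assumes "Q > 0" and "\<not> int Q dvd m"
  shows "(\<Sum>j<Q. e (real j * (of_int m / real Q))) = 0"
proof -
  define \<omega> where "\<omega> = e (of_int m / real Q)"
  have "\<omega> \<noteq> 1"
  proof
    assume "\<omega> = 1"
    then obtain z where "of_int m / real Q = of_int z"
      unfolding \<omega>_def by (metis e_eq_1_imp_Ints Ints_cases)
    then have "real_of_int m = real_of_int (z * int Q)"
      using assms(1) by (simp add: field_simps)
    then have "m = z * int Q" by (simp only: of_int_eq_iff)
    then show False using assms(2) by simp
  qed
  moreover have "\<omega> ^ Q = 1"
    unfolding \<omega>_def e_power using assms(1) by simp
  ultimately have "(\<Sum>j<Q. \<omega> ^ j) = 0" by (simp add: sum_gp_strict)
  then show ?thesis unfolding \<omega>_def e_power .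
qed

definition weyl_phase :: "nat \<Rightarrow> (nat \<Rightarrow> real) \<Rightarrow> nat \<Rightarrow> real" where
  "weyl_phase d x n = (\<Sum>k=1..d. x k * real n ^ k)"

definition weyl_sum_on :: "nat \<Rightarrow> (nat \<Rightarrow> real) \<Rightarrow> nat set \<Rightarrow> complex" where
  "weyl_sum_on d x A = (\<Sum>n\<in>A. e (weyl_phase d x n))"

lemma weyl_sum_eq_weyl_sum_on: "weyl_sum d x N = weyl_sum_on d x {1..N}"
  unfolding weyl_sum_def weyl_sum_on_def weyl_phase_def ..

definition grid :: "nat \<Rightarrow> nat \<Rightarrow> (nat \<Rightarrow> nat) set" where
  "grid d Q = (\<Pi>\<^sub>E k\<in>{1..d}. {..<Q})"

definition grid_point :: "nat \<Rightarrow> (nat \<Rightarrow> nat) \<Rightarrow> nat \<Rightarrow> real" where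
  "grid_point Q g k = real (g k) / real Q"

lemma finite_grid [simp]: "finite (grid d Q)"
  unfolding grid_def by (simp add: finite_PiE)

lemma card_grid: "card (grid d Q) = Q ^ d"
  unfolding grid_def by (simp add: card_PiE)

lemma grid_orthogonal:
  assumes "d \<ge> 1" and "n < Q" and "m < Q" and "n \<noteq> m"
  shows "(\<Sum>g\<in>grid d Q. e (weyl_phase d (grid_point Q g) n - weyl_phase d (grid_point Q g) m)) = 0"
proof -
  define c where "c k = (real n ^ k - real m ^ k) / real Q" for k
  have phase_diff: "weyl_phase d (grid_point Q g) n - weyl_phase d (grid_point Q g) m
      = (\<Sum>k=1..d. real (g k) * c k)" for g
    unfolding weyl_phase_def grid_point_def c_def
    by (simp add: sum_subtractf[symmetric] diff_divide_distrib algebra_simps)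
  txt \<open>The sum factorises over the coordinates, and the factor of the first coordinate runs
    over a full period of a nontrivial Q-th root of unity.\<close>
  have "(\<Sum>j<Q. e (real j * c 1)) = 0"
  proof -
    have "\<bar>int n - int m\<bar> < int Q" and "int n - int m \<noteq> 0" using assms(2-4) by auto
    then have "\<not> int Q dvd (int n - int m)"
      using dvd_imp_le_int[of "int n - int m" "int Q"] by auto
    then have "(\<Sum>j<Q. e (real j * (of_int (int n - int m) / real Q))) = 0"
      using assms(2) by (intro sum_e_multiples_eq_0) auto
    then show ?thesis by (simp add: c_def)
  qed
  then have "(\<Prod>k=1..d. \<Sum>j<Q. e (real j * c k)) = 0"
    using assms(1) by (intro prod_zero) auto
  also have "(\<Prod>k=1..d. \<Sum>j<Q. e (real j * c k)) = (\<Sum>g\<in>grid d Q. \<Prod>k=1..d. e (real (g k) * c k))"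
    unfolding grid_def by (rule prod_sum_PiE) auto
  finally show ?thesis by (simp add: phase_diff e_sum)
qed

lemma grid_parseval:
  assumes "d \<ge> 1" and "A \<subseteq> {..<Q}"
  shows "(\<Sum>g\<in>grid d Q. (norm (weyl_sum_on d (grid_point Q g) A))\<^sup>2) = real Q ^ d * real (card A)"
proof -
  let ?\<phi> = "\<lambda>g. weyl_phase d (grid_point Q g)"
  have fin: "finite A" using assms(2) finite_subset by blast
  have inner: "(\<Sum>g\<in>grid d Q. e (?\<phi> g n - ?\<phi> g m)) = (if n = m then of_nat (Q ^ d) else 0)"
    if "n \<in> A" "m \<in> A" for n m
    using grid_orthogonal[OF assms(1), of n Q m] that assms(2) by (auto simp: card_grid)
  have "complex_of_real (\<Sum>g\<in>grid d Q. (norm (weyl_sum_on d (grid_point Q g) A))\<^sup>2)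
      = (\<Sum>g\<in>grid d Q. weyl_sum_on d (grid_point Q g) A * cnj (weyl_sum_on d (grid_point Q g) A))"
    by (simp only: of_real_sum complex_norm_square)
  also have "\<dots> = (\<Sum>g\<in>grid d Q. \<Sum>m\<in>A. \<Sum>n\<in>A. e (?\<phi> g n - ?\<phi> g m))"
    by (simp add: weyl_sum_on_def cnj_e sum_distrib_left sum_distrib_right flip: e_add)
  also have "\<dots> = (\<Sum>m\<in>A. \<Sum>n\<in>A. \<Sum>g\<in>grid d Q. e (?\<phi> g n - ?\<phi> g m))"
    by (subst sum.swap) (rule sum.cong[OF refl], rule sum.swap)
  also have "\<dots> = (\<Sum>m\<in>A. \<Sum>n\<in>A. if n = m then of_nat (Q ^ d) else 0)"
    by (intro sum.cong refl) (simp add: inner)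
  also have "\<dots> = complex_of_real (real Q ^ d * real (card A))"
    using fin by simp
  finally show ?thesis by (simp only: of_real_eq_iff)
qed

lemma card_ge_le_sum_squares:
  fixes f :: "'a \<Rightarrow> real"
  assumes "finite G" and "\<mu> > 0"
  shows "real (card {g\<in>G. \<mu> \<le> f g}) \<le> (\<Sum>g\<in>G. (f g)\<^sup>2) / \<mu>\<^sup>2"
proof -
  have "real (card {g\<in>G. \<mu> \<le> f g}) * \<mu>\<^sup>2 = (\<Sum>g\<in>{g\<in>G. \<mu> \<le> f g}. \<mu>\<^sup>2)" by simp
  also have "\<dots> \<le> (\<Sum>g\<in>{g\<in>G. \<mu> \<le> f g}. (f g)\<^sup>2)"
    using assms(2) by (intro sum_mono power_mono) auto
  also have "\<dots> \<le> (\<Sum>g\<in>G. (f g)\<^sup>2)"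
    using assms(1) by (intro sum_mono2) auto
  finally show ?thesis using assms(2) by (simp add: field_simps)
qed

lemma card_large_weyl_sum_on_le:
  assumes "d \<ge> 1" and "\<mu> > 0" and "A \<subseteq> {..<Q}"
  shows "real (card {g\<in>grid d Q. \<mu> \<le> norm (weyl_sum_on d (grid_point Q g) A)})
           \<le> real Q ^ d * real (card A) / \<mu>\<^sup>2"
  using card_ge_le_sum_squares[OF finite_grid[of d Q] assms(2), where f = "\<lambda>g. norm (weyl_sum_on d (grid_point Q g) A)"]
    grid_parseval[OF assms(1,3)] by simp

section \<open>Dyadic decomposition\<close>

lemma norm_sum_le_card_mult_max:
  fixes v :: "'i \<Rightarrow> 'a::real_normed_vector"
  assumes "finite I" and "I \<noteq> {}"
  shows "\<exists>i\<in>I. norm (sum v I) \<le> real (card I) * norm (v i)"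
proof -
  have "Max ((\<lambda>j. norm (v j)) ` I) \<in> (\<lambda>j. norm (v j)) ` I"
    using assms by (intro Max_in) auto
  then obtain i where i: "i \<in> I" "norm (v i) = Max ((\<lambda>j. norm (v j)) ` I)"
    by (metis imageE)
  have "norm (sum v I) \<le> (\<Sum>j\<in>I. norm (v j))" by (rule norm_sum)
  also have "\<dots> \<le> (\<Sum>j\<in>I. norm (v i))"
    using assms(1) i(2) by (intro sum_mono) simp
  finally show ?thesis using i(1) by auto
qed

definition dyadic_block :: "nat \<Rightarrow> nat \<Rightarrow> nat set" where
  "dyadic_block l a = {a * 2^l<..(a + 1) * 2^l}"

lemma card_dyadic_block [simp]: "card (dyadic_block l a) = 2 ^ l"
  unfolding dyadic_block_def by (simp add: algebra_simps)

lemma dyadic_piece_cases: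
  fixes N l :: nat
  shows "{2^Suc l * (N div 2^Suc l)<..2^l * (N div 2^l)} = {}
         \<or> (\<exists>a. {2^Suc l * (N div 2^Suc l)<..2^l * (N div 2^l)} = dyadic_block l a \<and> (a + 1) * 2^l \<le> N)"
proof -
  define q where "q = N div 2^Suc l"
  have "N div 2^Suc l = N div 2^l div 2" by (simp only: power_Suc2 div_mult2_eq)
  then have split: "N div 2^l = 2 * q + (N div 2^l) mod 2"
    unfolding q_def using div_mult_mod_eq[of "N div 2^l" 2] by simp
  show ?thesis
  proof (cases "(N div 2^l) mod 2 = 0")
    case True
    then have "2^Suc l * (N div 2^Suc l) = 2^l * (N div 2^l)"
      using split unfolding q_def by (simp add: mult_ac)
    then show ?thesis by simp
  next
    case False
    then have "2^l * (N div 2^l) = (2 * q + 1) * 2^l" and "2^Suc l * (N div 2^Suc l) = 2 * q * 2^l"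
      using split unfolding q_def by (simp_all add: mult_ac)
    moreover have "2^l * (N div 2^l) \<le> N" by (rule times_div_less_eq_dividend)
    ultimately have "{2^Suc l * (N div 2^Suc l)<..2^l * (N div 2^l)} = dyadic_block l (2 * q)"
      and "(2 * q + 1) * 2^l \<le> N"
      unfolding dyadic_block_def by (simp_all add: mult_ac)
    then show ?thesis by blast
  qed
qed

lemma sum_eq_sum_dyadic_pieces:
  fixes f :: "nat \<Rightarrow> 'a::ab_group_add"
  assumes "N < 2^Suc J"
  shows "(\<Sum>n=1..N. f n) = (\<Sum>l\<le>J. \<Sum>n\<in>{2^Suc l * (N div 2^Suc l)<..2^l * (N div 2^l)}. f n)"
proof -
  define P where "P l = 2^l * (N div 2^l)" for l :: nat
  define F where "F m = (\<Sum>n=1..m. f n)" for m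
  have "P (Suc J) = 0" and "P 0 = N" unfolding P_def using assms by simp_all
  then have "F N = (\<Sum>l<Suc J. F (P l) - F (P (Suc l)))"
    using sum_lessThan_telescope'[of "\<lambda>l. F (P l)" "Suc J"] by (simp add: F_def)
  also have "\<dots> = (\<Sum>l\<le>J. \<Sum>n\<in>{P (Suc l)<..P l}. f n)"
  proof (intro sum.cong)
    fix l
    have "N div 2^Suc l = N div 2^l div 2" by (simp only: power_Suc2 div_mult2_eq)
    then have "P (Suc l) = 2^l * (2 * (N div 2^l div 2))" unfolding P_def by (simp add: mult_ac)
    then have "P (Suc l) \<le> P l"
      unfolding P_def by (simp add: times_div_less_eq_dividend)
    moreover have "{1..P l} - {1..P (Suc l)} = {P (Suc l)<..P l}" by auto
    ultimately show "F (P l) - F (P (Suc l)) = (\<Sum>n\<in>{P (Suc l)<..P l}. f n)"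
      unfolding F_def by (simp flip: sum_diff)
  qed auto
  finally show ?thesis unfolding F_def P_def .
qed

lemma norm_sum_le_dyadic_block:
  fixes f :: "nat \<Rightarrow> 'a::real_normed_vector"
  assumes "N \<le> 2^J"
  shows "\<exists>l\<le>J. \<exists>a. (a + 1) * 2^l \<le> (2::nat)^J
           \<and> norm (\<Sum>n=1..N. f n) \<le> real (J + 1) * norm (\<Sum>n\<in>dyadic_block l a. f n)"
proof -
  let ?piece = "\<lambda>l. {2^Suc l * (N div 2^Suc l)<..2^l * (N div 2^l)}"
  have "N < 2^Suc J" using assms zero_less_power[of "2::nat" J] unfolding power_Suc by linarith
  then have "(\<Sum>n=1..N. f n) = (\<Sum>l\<le>J. \<Sum>n\<in>?piece l. f n)"
    by (rule sum_eq_sum_dyadic_pieces)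
  moreover obtain l where "l \<in> {..J}"
    and "norm (\<Sum>l\<le>J. \<Sum>n\<in>?piece l. f n) \<le> real (card {..J}) * norm (\<Sum>n\<in>?piece l. f n)"
    using norm_sum_le_card_mult_max[of "{..J}" "\<lambda>l. \<Sum>n\<in>?piece l. f n"] by blast
  ultimately have l: "l \<le> J"
    and bound: "norm (\<Sum>n=1..N. f n) \<le> real (J + 1) * norm (\<Sum>n\<in>?piece l. f n)"
    by auto
  from dyadic_piece_cases[of l N] show ?thesis
  proof
    assume "?piece l = {}"
    then show ?thesis using bound by (auto intro!: exI[of _ "0::nat"])
  next
    assume "\<exists>a. ?piece l = dyadic_block l a \<and> (a + 1) * 2^l \<le> N"
    then obtain a where "?piece l = dyadic_block l a" "(a + 1) * 2^l \<le> N" by blast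
    then have "(a + 1) * 2^l \<le> (2::nat)^J"
      and "norm (\<Sum>n=1..N. f n) \<le> real (J + 1) * norm (\<Sum>n\<in>dyadic_block l a. f n)"
      using bound assms by auto
    then show ?thesis using l by blast
  qed
qed

section \<open>Discretisation of the large Weyl sums\<close>

lemma abs_weyl_phase_diff_le:
  assumes "\<forall>k\<in>{1..d}. \<bar>x k - y k\<bar> \<le> \<eta>" and "real n \<le> R"
  shows "\<bar>weyl_phase d x n - weyl_phase d y n\<bar> \<le> real d * \<eta> * R ^ d"
proof -
  have "\<bar>weyl_phase d x n - weyl_phase d y n\<bar> = \<bar>\<Sum>k=1..d. (x k - y k) * real n ^ k\<bar>"
    unfolding weyl_phase_def by (simp add: sum_subtractf[symmetric] left_diff_distrib)
  also have "\<dots> \<le> (\<Sum>k=1..d. \<bar>x k - y k\<bar> * real n ^ k)"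
    using sum_abs[of "\<lambda>k. (x k - y k) * real n ^ k" "{1..d}"] by (simp add: abs_mult)
  also have "\<dots> \<le> (\<Sum>k=1..d. \<eta> * R ^ d)"
  proof (rule sum_mono)
    fix k assume k: "k \<in> {1..d}"
    have "real n ^ k \<le> R ^ d"
    proof (cases "n = 0")
      case False
      then have "real n ^ k \<le> real n ^ d" using k by (intro power_increasing) auto
      also have "\<dots> \<le> R ^ d" using assms(2) by (intro power_mono) auto
      finally show ?thesis .
    qed (use k assms(2) in \<open>auto simp: power_0_left\<close>)
    then show "\<bar>x k - y k\<bar> * real n ^ k \<le> \<eta> * R ^ d"
      using assms(1) k by (intro mult_mono) auto
  qed
  finally show ?thesis by simp
qed

lemma norm_weyl_sum_on_diff_le:
  assumes "\<forall>k\<in>{1..d}. \<bar>x k - y k\<bar> \<le> \<eta>" and "A \<subseteq> {..R}"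
  shows "norm (weyl_sum_on d x A - weyl_sum_on d y A) \<le> real (card A) * (2 * pi * real d * \<eta> * real R ^ d)"
proof -
  have "norm (weyl_sum_on d x A - weyl_sum_on d y A)
      \<le> (\<Sum>n\<in>A. norm (e (weyl_phase d x n) - e (weyl_phase d y n)))"
    unfolding weyl_sum_on_def sum_subtractf[symmetric] by (rule norm_sum)
  also have "\<dots> \<le> (\<Sum>n\<in>A. 2 * pi * real d * \<eta> * real R ^ d)"
  proof (rule sum_mono)
    fix n assume "n \<in> A"
    then have "\<bar>weyl_phase d x n - weyl_phase d y n\<bar> \<le> real d * \<eta> * real R ^ d"
      using assms by (intro abs_weyl_phase_diff_le) auto
    then show "norm (e (weyl_phase d x n) - e (weyl_phase d y n)) \<le> 2 * pi * real d * \<eta> * real R ^ d"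
      by (intro order_trans[OF norm_e_diff_le]) (simp add: mult.assoc)
  qed
  finally show ?thesis by simp
qed

definition bad_grid :: "nat \<Rightarrow> nat \<Rightarrow> nat \<Rightarrow> real \<Rightarrow> (nat \<Rightarrow> nat) set" where
  "bad_grid d Q J \<mu> = {g \<in> grid d Q. \<exists>l\<le>J. \<exists>a. (a + 1) * 2^l \<le> (2::nat)^J
                          \<and> \<mu> \<le> norm (weyl_sum_on d (grid_point Q g) (dyadic_block l a))}"

lemma finite_bad_grid [simp]: "finite (bad_grid d Q J \<mu>)"
  unfolding bad_grid_def by simp

lemma card_bad_grid_le:
  assumes "d \<ge> 1" and "\<mu> > 0" and "2^J < Q"
  shows "real (card (bad_grid d Q J \<mu>)) \<le> real (J + 1) * 2^J * real Q ^ d / \<mu>\<^sup>2"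
proof -
  define S where "S l a = {g\<in>grid d Q. \<mu> \<le> norm (weyl_sum_on d (grid_point Q g) (dyadic_block l a))}" for l a
  have fin: "finite (S l a)" for l a unfolding S_def by simp
  have block_le_iff: "(a + 1) * 2^l \<le> (2::nat)^J \<longleftrightarrow> a < 2^(J - l)" if "l \<le> J" for l a
  proof -
    have "(2::nat)^J = 2^(J - l) * 2^l" using that by (simp flip: power_add)
    then show ?thesis using mult_le_cancel2[of "a + 1" "2^l" "2^(J - l)"] by (simp add: Suc_le_eq)
  qed
  then have "bad_grid d Q J \<mu> = (\<Union>l\<in>{..J}. \<Union>a\<in>{..<2^(J - l)}. S l a)"
    unfolding bad_grid_def S_def by auto
  then have "card (bad_grid d Q J \<mu>) \<le> (\<Sum>l\<in>{..J}. \<Sum>a\<in>{..<2^(J - l)}. card (S l a))"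
    using fin by (auto intro!: card_UN_le[THEN order_trans] sum_mono card_UN_le)
  then have "real (card (bad_grid d Q J \<mu>)) \<le> (\<Sum>l\<in>{..J}. \<Sum>a\<in>{..<2^(J - l)}. real (card (S l a)))"
    by (simp flip: of_nat_sum)
  also have "\<dots> \<le> (\<Sum>l\<in>{..J}. \<Sum>a\<in>{..<(2::nat)^(J - l)}. real Q ^ d * 2^l / \<mu>\<^sup>2)"
  proof (intro sum_mono)
    fix l a assume "l \<in> {..J}" "a \<in> {..<(2::nat)^(J - l)}"
    then have "dyadic_block l a \<subseteq> {..<Q}"
      using \<open>2^J < Q\<close> block_le_iff[of l a] unfolding dyadic_block_def by auto
    from card_large_weyl_sum_on_le[OF assms(1,2) this]
    show "real (card (S l a)) \<le> real Q ^ d * 2^l / \<mu>\<^sup>2" unfolding S_def by simp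
  qed
  also have "\<dots> = (\<Sum>l\<in>{..J}. 2^J * real Q ^ d / \<mu>\<^sup>2)"
  proof (intro sum.cong refl)
    fix l assume "l \<in> {..J}"
    then have "(2::real)^(J - l) * 2^l = 2^J" by (simp flip: power_add)
    then show "(\<Sum>a\<in>{..<(2::nat)^(J - l)}. real Q ^ d * 2^l / \<mu>\<^sup>2) = 2^J * real Q ^ d / \<mu>\<^sup>2"
      by (simp add: field_simps)
  qed
  finally show ?thesis by simp
qed

definition cell :: "nat \<Rightarrow> nat \<Rightarrow> (nat \<Rightarrow> nat) \<Rightarrow> (nat \<Rightarrow> real) set" where
  "cell d Q g = {y. \<forall>k\<in>{1..d}. \<bar>y k - grid_point Q g k\<bar> \<le> 1 / real Q}"

lemma euc_dist_cell_le:
  assumes "y \<in> cell d Q g" and "z \<in> cell d Q g"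
  shows "euc_dist d y z \<le> 2 * sqrt (real d) / real Q"
proof -
  have "(\<Sum>k=1..d. (y k - z k)\<^sup>2) \<le> (\<Sum>k=1..d. (2 / real Q)\<^sup>2)"
  proof (rule sum_mono)
    fix k assume "k \<in> {1..d}"
    then have "\<bar>y k - grid_point Q g k\<bar> \<le> 1 / real Q" "\<bar>z k - grid_point Q g k\<bar> \<le> 1 / real Q"
      using assms unfolding cell_def by auto
    then have "\<bar>y k - z k\<bar> \<le> 2 / real Q" by (simp add: abs_le_iff)
    then show "(y k - z k)\<^sup>2 \<le> (2 / real Q)\<^sup>2"
      by (metis abs_ge_zero power2_abs power_mono)
  qed
  also have "\<dots> = (2 * sqrt (real d) / real Q)\<^sup>2"
    by (simp add: power_divide power_mult_distrib)
  finally have "euc_dist d y z \<le> sqrt ((2 * sqrt (real d) / real Q)\<^sup>2)"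
    unfolding euc_dist_def by (rule real_sqrt_le_mono)
  then show ?thesis by simp
qed

lemma torus_subset_cells:
  assumes "Q > 0" and "x \<in> torus d"
  shows "\<exists>g\<in>grid d Q. x \<in> cell d Q g"
proof -
  define g where "g = restrict (\<lambda>k. nat \<lfloor>real Q * x k\<rfloor>) {1..d}"
  have "g k < Q \<and> \<bar>x k - grid_point Q g k\<bar> \<le> 1 / real Q" if k: "k \<in> {1..d}" for k
  proof -
    have "0 \<le> x k" "x k < 1" using assms(2) k unfolding torus_def by auto
    then have t: "0 \<le> real Q * x k" "real Q * x k < real Q" using assms(1) by auto
    then have g_eq: "real (g k) = of_int \<lfloor>real Q * x k\<rfloor>" unfolding g_def using k by simp
    have "x k - grid_point Q g k = (real Q * x k - of_int \<lfloor>real Q * x k\<rfloor>) / real Q"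
      unfolding grid_point_def g_eq using assms(1) by (simp add: field_simps)
    moreover have "0 \<le> real Q * x k - of_int \<lfloor>real Q * x k\<rfloor>" "real Q * x k - of_int \<lfloor>real Q * x k\<rfloor> \<le> 1"
      by linarith+
    ultimately have "\<bar>x k - grid_point Q g k\<bar> \<le> 1 / real Q"
      using assms(1) by (simp add: divide_right_mono)
    moreover have "real (g k) < real Q" using g_eq t by linarith
    ultimately show ?thesis by simp
  qed
  then have "g \<in> grid d Q" and "x \<in> cell d Q g"
    unfolding grid_def cell_def g_def by auto
  then show ?thesis by blast
qed

lemma large_weyl_sum_in_bad_cell:
  assumes "x \<in> torus d" and "Q > 0" and "N \<le> 2^J"
    and large: "2 * real (J + 1) * \<mu> \<le> norm (weyl_sum d x N)"
    and fine: "2^J * (2 * pi * real d * (1 / real Q) * 2^(J * d)) \<le> \<mu>"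
  shows "\<exists>g\<in>bad_grid d Q J \<mu>. x \<in> cell d Q g"
proof -
  obtain l a where la: "l \<le> J" "(a + 1) * 2^l \<le> (2::nat)^J"
    and block: "norm (weyl_sum d x N) \<le> real (J + 1) * norm (weyl_sum_on d x (dyadic_block l a))"
    using norm_sum_le_dyadic_block[OF assms(3), of "\<lambda>n. e (weyl_phase d x n)"]
    unfolding weyl_sum_eq_weyl_sum_on weyl_sum_on_def by blast
  from order_trans[OF large block]
  have "real (J + 1) * (2 * \<mu>) \<le> real (J + 1) * norm (weyl_sum_on d x (dyadic_block l a))"
    by (simp only: mult.assoc mult.left_commute[of 2])
  then have "2 * \<mu> \<le> norm (weyl_sum_on d x (dyadic_block l a))"
    by (rule mult_left_le_imp_le) simp
  obtain g where g: "g \<in> grid d Q" "x \<in> cell d Q g"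
    using torus_subset_cells[OF assms(2,1)] by blast
  have "dyadic_block l a \<subseteq> {..2^J}" using la(2) unfolding dyadic_block_def by auto
  then have "norm (weyl_sum_on d x (dyadic_block l a) - weyl_sum_on d (grid_point Q g) (dyadic_block l a))
      \<le> 2^l * (2 * pi * real d * (1 / real Q) * real (2^J) ^ d)"
    using g(2) unfolding cell_def by (intro order_trans[OF norm_weyl_sum_on_diff_le]) auto
  also have "\<dots> \<le> \<mu>"
  proof -
    have "(2::real)^l \<le> 2^J" using la(1) by (intro power_increasing) auto
    then have "2^l * (2 * pi * real d * (1 / real Q) * 2^(J * d))
        \<le> 2^J * (2 * pi * real d * (1 / real Q) * 2^(J * d))"
      by (rule mult_right_mono) simp
    then show ?thesis using fine by (simp add: power_mult)
  qed
  finally have "\<mu> \<le> norm (weyl_sum_on d (grid_point Q g) (dyadic_block l a))"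
    using \<open>2 * \<mu> \<le> _\<close> norm_triangle_sub[of "weyl_sum_on d x (dyadic_block l a)"
        "weyl_sum_on d (grid_point Q g) (dyadic_block l a)"] by linarith
  then show ?thesis using g la unfolding bad_grid_def by blast
qed

lemma dyadic_scale_exists:
  fixes N :: nat
  assumes "1 \<le> N"
  shows "\<exists>J. N \<le> 2^J \<and> 2^J < 2 * N"
proof -
  define J where "J = (LEAST J. N \<le> 2^J)"
  have "N \<le> 2^J" unfolding J_def by (rule LeastI[of _ N]) simp
  moreover have "2^J < 2 * N"
  proof (cases J)
    case (Suc j)
    then have "j < (LEAST J. N \<le> 2^J)" unfolding J_def by simp
    then have "\<not> N \<le> 2^j" by (rule not_less_Least)
    then show ?thesis using Suc by simp
  qed (use assms in simp)
  ultimately show ?thesis by blast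
qed

lemma E_set_subset_bad_cells:
  fixes Q :: "nat \<Rightarrow> nat" and \<mu> :: "nat \<Rightarrow> real"
  assumes "0 \<le> \<alpha>"
    and scale: "\<And>J. J0 \<le> J \<Longrightarrow> Q J > 0
                 \<and> 2^J * (2 * pi * real d * (1 / real (Q J)) * 2^(J * d)) \<le> \<mu> J
                 \<and> 2 * real (J + 1) * \<mu> J \<le> (2^J / 2) powr \<alpha>"
  shows "E_set d \<alpha> \<subseteq> (\<Union>J\<in>{J0..}. \<Union>g\<in>bad_grid d (Q J) J (\<mu> J). cell d (Q J) g)"
proof
  fix x assume "x \<in> E_set d \<alpha>"
  then have x: "x \<in> torus d"
    and "infinite {N. N \<ge> 1 \<and> real N powr \<alpha> \<le> norm (weyl_sum d x N)}"
    unfolding E_set_def by auto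
  then obtain N where N: "2^J0 \<le> N" "1 \<le> N" "real N powr \<alpha> \<le> norm (weyl_sum d x N)"
    unfolding infinite_nat_iff_unbounded_le by blast
  obtain J where J: "N \<le> 2^J" "2^J < 2 * N"
    using dyadic_scale_exists[OF N(2)] by blast
  have "J0 \<le> J"
  proof -
    have "(2::nat)^J0 \<le> 2^J" using N(1) J(1) by linarith
    then show ?thesis by simp
  qed
  have "(2^J / 2) powr \<alpha> \<le> real N powr \<alpha>"
  proof (rule powr_mono2)
    have "real (2^J) < 2 * real N" using J(2) by linarith
    then show "2^J / 2 \<le> real N" by simp
  qed (use assms(1) in auto)
  then have "2 * real (J + 1) * \<mu> J \<le> norm (weyl_sum d x N)"
    using scale[OF \<open>J0 \<le> J\<close>] N(3) by linarith
  then obtain g where "g \<in> bad_grid d (Q J) J (\<mu> J)" "x \<in> cell d (Q J) g"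
    using large_weyl_sum_in_bad_cell[OF x _ J(1)] scale[OF \<open>J0 \<le> J\<close>] by blast
  then show "x \<in> (\<Union>J\<in>{J0..}. \<Union>g\<in>bad_grid d (Q J) J (\<mu> J). cell d (Q J) g)"
    using \<open>J0 \<le> J\<close> by blast
qed

section \<open>Hausdorff measure of countable covers\<close>

lemma diam_wrt_le:
  assumes "\<And>x y. x \<in> C \<Longrightarrow> y \<in> C \<Longrightarrow> dd x y \<le> B" and "0 \<le> B"
  shows "diam_wrt dd C \<le> B"
proof (cases "C = {}")
  case False
  then have "{dd x y | x y. x \<in> C \<and> y \<in> C} \<noteq> {}" by blast
  then have "Sup {dd x y | x y. x \<in> C \<and> y \<in> C} \<le> B"
    by (rule cSup_least) (use assms(1) in blast)
  then show ?thesis using False unfolding diam_wrt_def by simp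
qed (use assms(2) in \<open>simp add: diam_wrt_def\<close>)

lemma diam_wrt_nonneg:
  assumes "bounded_wrt dd C" and "\<And>x. dd x x = 0"
  shows "0 \<le> diam_wrt dd C"
proof (cases "C = {}")
  case False
  then obtain x where "x \<in> C" by auto
  moreover have "bdd_above {dd x y | x y. x \<in> C \<and> y \<in> C}"
    using assms(1) unfolding bounded_wrt_def bdd_above_def by blast
  ultimately have "dd x x \<le> Sup {dd x y | x y. x \<in> C \<and> y \<in> C}"
    by (intro cSup_upper) auto
  then show ?thesis using False assms(2) unfolding diam_wrt_def by simp
qed (simp add: diam_wrt_def)

lemma haus_term_le:
  assumes "\<And>x y. x \<in> C \<Longrightarrow> y \<in> C \<Longrightarrow> dd x y \<le> B" and "\<And>x. dd x x = 0" and "0 \<le> B" and "0 < s"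
  shows "haus_term dd s C \<le> ennreal (B powr s)"
proof -
  have "bounded_wrt dd C" using assms(1) unfolding bounded_wrt_def by blast
  then have "diam_wrt dd C powr s \<le> B powr s"
    using diam_wrt_le[OF assms(1,3)] diam_wrt_nonneg[of dd C, OF _ assms(2)] by (intro powr_mono2) (use assms in auto)
  then show ?thesis unfolding haus_term_def using assms(4) by (auto intro: ennreal_leI)
qed

lemma hausdorff_pre_le_double_suminf:
  fixes V :: "nat \<times> nat \<Rightarrow> 'a set"
  assumes "A \<subseteq> (\<Union>p. V p)" and "\<And>p. bounded_wrt dd (V p) \<and> diam_wrt dd (V p) \<le> \<delta>"
  shows "hausdorff_pre dd s \<delta> A \<le> (\<Sum>J. \<Sum>i. haus_term dd s (V (J, i)))"
proof -
  have "A \<subseteq> (\<Union>n. V (prod_decode n))"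
  proof
    fix x assume "x \<in> A"
    then obtain p where "x \<in> V p" using assms(1) by blast
    then show "x \<in> (\<Union>n. V (prod_decode n))" by (intro UN_I[of "prod_encode p"]) auto
  qed
  then have "hausdorff_pre dd s \<delta> A \<le> (\<Sum>n. haus_term dd s (V (prod_decode n)))"
    unfolding hausdorff_pre_def using assms(2) by (intro INF_lower) auto
  also have "\<dots> = (\<Sum>J. \<Sum>i. haus_term dd s (V (J, i)))"
    by (rule suminf_ennreal_2dimen[where f = "\<lambda>p. haus_term dd s (V p)"]) simp
  finally show ?thesis .
qed

lemma hausdorff_pre_le_indexed_covers:
  fixes V :: "nat \<Rightarrow> nat \<Rightarrow> 'a set" and n :: "nat \<Rightarrow> nat"
  assumes cover: "A \<subseteq> (\<Union>J. \<Union>i<n J. V J i)"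
    and small: "\<And>J i y z. i < n J \<Longrightarrow> y \<in> V J i \<Longrightarrow> z \<in> V J i \<Longrightarrow> dd y z \<le> r J"
    and r: "\<And>J. 0 \<le> r J" "\<And>J. n J \<noteq> 0 \<Longrightarrow> r J \<le> \<delta>" and "0 \<le> \<delta>"
    and dd0: "\<And>x. dd x x = 0" and "0 < s"
    and total: "\<And>K. (\<Sum>J<K. real (n J) * r J powr s) \<le> \<epsilon>"
  shows "hausdorff_pre dd s \<delta> A \<le> ennreal \<epsilon>"
proof -
  define W where "W = (\<lambda>(J, i). if i < n J then V J i else {})"
  have W_small: "dd y z \<le> r J" if "y \<in> W (J, i)" "z \<in> W (J, i)" for J i y z
    using that unfolding W_def by (auto split: if_splits intro: small)
  have bd: "bounded_wrt dd (W p) \<and> diam_wrt dd (W p) \<le> \<delta>" for p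
  proof (cases p)
    case (Pair J i)
    show ?thesis
    proof (cases "i < n J")
      case True
      have "diam_wrt dd (W p) \<le> r J"
        using W_small r(1) unfolding Pair by (intro diam_wrt_le)
      moreover have "r J \<le> \<delta>" using True r(2) by simp
      ultimately have "diam_wrt dd (W p) \<le> \<delta>" by linarith
      moreover have "bounded_wrt dd (W p)"
        using W_small unfolding Pair bounded_wrt_def by blast
      ultimately show ?thesis by blast
    qed (use \<open>0 \<le> \<delta>\<close> in \<open>simp add: Pair W_def bounded_wrt_def diam_wrt_def\<close>)
  qed
  have "A \<subseteq> (\<Union>p. W p)"
    using cover unfolding W_def by fastforce
  then have "hausdorff_pre dd s \<delta> A \<le> (\<Sum>J. \<Sum>i. haus_term dd s (W (J, i)))"
    using bd by (rule hausdorff_pre_le_double_suminf)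
  also have "\<dots> \<le> ennreal \<epsilon>"
  proof (rule suminf_le_const[OF summableI])
    have row: "(\<Sum>i. haus_term dd s (W (J, i))) \<le> ennreal (real (n J) * r J powr s)" for J
    proof -
      have "(\<Sum>i. haus_term dd s (W (J, i))) = (\<Sum>i<n J. haus_term dd s (W (J, i)))"
        by (rule suminf_finite) (auto simp: W_def haus_term_def)
      also have "\<dots> \<le> (\<Sum>i<n J. ennreal (r J powr s))"
        using W_small dd0 \<open>0 < s\<close> r(1) by (intro sum_mono haus_term_le) auto
      finally show ?thesis by (simp add: ennreal_mult' flip: ennreal_of_nat_eq_real_of_nat)
    qed
    fix K
    have "(\<Sum>J<K. \<Sum>i. haus_term dd s (W (J, i))) \<le> (\<Sum>J<K. ennreal (real (n J) * r J powr s))"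
      by (intro sum_mono row)
    also have "\<dots> = ennreal (\<Sum>J<K. real (n J) * r J powr s)"
      using r(1) by (intro sum_ennreal) simp
    also have "\<dots> \<le> ennreal \<epsilon>" using total by (intro ennreal_leI)
    finally show "(\<Sum>J<K. \<Sum>i. haus_term dd s (W (J, i))) \<le> ennreal \<epsilon>" .
  qed
  finally show ?thesis .
qed

lemma hausdorff_pre_le_finite_covers:
  fixes U :: "nat \<Rightarrow> 'b \<Rightarrow> 'a set" and F :: "nat \<Rightarrow> 'b set"
  assumes fin: "\<And>J. finite (F J)"
    and cover: "A \<subseteq> (\<Union>J. \<Union>g\<in>F J. U J g)"
    and small: "\<And>J g y z. g \<in> F J \<Longrightarrow> y \<in> U J g \<Longrightarrow> z \<in> U J g \<Longrightarrow> dd y z \<le> r J"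
    and r: "\<And>J. 0 \<le> r J" "\<And>J. F J \<noteq> {} \<Longrightarrow> r J \<le> \<delta>" and "0 \<le> \<delta>"
    and "\<And>x. dd x x = 0" and "0 < s"
    and total: "\<And>K. (\<Sum>J<K. real (card (F J)) * r J powr s) \<le> \<epsilon>"
  shows "hausdorff_pre dd s \<delta> A \<le> ennreal \<epsilon>"
proof -
  have "\<forall>J. \<exists>h. bij_betw h {..<card (F J)} (F J)"
    using fin ex_bij_betw_nat_finite lessThan_atLeast0 by metis
  then obtain h where h: "\<And>J. bij_betw (h J) {..<card (F J)} (F J)" by metis
  have "A \<subseteq> (\<Union>J. \<Union>i<card (F J). U J (h J i))"
  proof
    fix x assume "x \<in> A"
    then obtain J g where g: "g \<in> F J" "x \<in> U J g" using cover by blast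
    moreover obtain i where "i < card (F J)" "g = h J i"
      using g(1) h[of J] by (auto simp: bij_betw_def)
    ultimately show "x \<in> (\<Union>J. \<Union>i<card (F J). U J (h J i))" by blast
  qed
  moreover have "dd y z \<le> r J" if "i < card (F J)" "y \<in> U J (h J i)" "z \<in> U J (h J i)" for J i y z
    using that h[of J] by (intro small) (auto dest: bij_betwE)
  ultimately show ?thesis
    using r assms(6-9) by (intro hausdorff_pre_le_indexed_covers[where r = r]) (auto simp: fin card_gt_0_iff)
qed

lemma hausdorff_measure_eq_0I:
  assumes "\<And>\<delta> \<epsilon>. 0 < \<delta> \<Longrightarrow> 0 < \<epsilon> \<Longrightarrow> hausdorff_pre dd s \<delta> A \<le> ennreal \<epsilon>"
  shows "hausdorff_measure dd s A = 0"
proof -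
  have "hausdorff_pre dd s \<delta> A = 0" if "0 < \<delta>" for \<delta>
    using assms[OF that] by (metis add_0 ennreal_le_epsilon le_zero_eq)
  then show ?thesis unfolding hausdorff_measure_def by simp
qed

lemma hausdorff_dim_le:
  assumes "0 \<le> s" and "hausdorff_measure dd s A = 0"
  shows "hausdorff_dim dd A \<le> ereal s"
  unfolding hausdorff_dim_def using assms by (intro Inf_lower) auto

section \<open>Choice of the scales\<close>

text \<open>
  Q_J = grid_scale d J is fine enough for the discretisation error 2\<pi>d / 2^J of a block sum to
  stay below \<mu>_J = block_threshold \<alpha> J, and 2 (J+1) \<mu>_J = (2^J/2)^\<alpha> is the lower bound
  for N^\<alpha> when N \<le> 2^J < 2N.
\<close>

definition grid_scale :: "nat \<Rightarrow> nat \<Rightarrow> nat" where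
  "grid_scale d J = 2 ^ ((d + 2) * J)"

definition block_threshold :: "real \<Rightarrow> nat \<Rightarrow> real" where
  "block_threshold \<alpha> J = (2^J / 2) powr \<alpha> / (2 * real (J + 1))"

text \<open>
  The exponent s is chosen so that Q_J^(d-s) = 2^((\<alpha>-1/2)J) consumes only half of the factor
  2^((2\<alpha>-1)J) by which the Chebyshev bound undercuts the Q_J^d cells of the grid.
\<close>

lemma bad_cells_cost_eq:
  fixes d J :: nat and \<alpha> s :: real
  assumes s: "s = real d - (\<alpha> - 1/2) / (real d + 2)"
  shows "real (J + 1) * 2^J * real (grid_scale d J) ^ d / (block_threshold \<alpha> J)\<^sup>2
           * (2 * sqrt (real d) / real (grid_scale d J)) powr s
         = 4 * 2 powr (2 * \<alpha>) * (2 * sqrt (real d)) powr s * real (J + 1) ^ 3 * 2 powr (- (\<alpha> - 1/2) * real J)"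
proof -
  define q where "q = (real d + 2) * real J"
  have "real (grid_scale d J) = 2 powr real ((d + 2) * J)"
    unfolding grid_scale_def by (subst powr_realpow) simp_all
  then have Q: "real (grid_scale d J) = 2 powr q" unfolding q_def by (simp add: algebra_simps)
  have Qd: "real (grid_scale d J) ^ d = 2 powr (real d * q)"
    unfolding Q by (simp add: powr_power)
  have Qs: "(2 * sqrt (real d) / real (grid_scale d J)) powr s = (2 * sqrt (real d)) powr s / 2 powr (q * s)"
    unfolding Q by (simp add: powr_divide powr_powr)
  have "2^J / 2 = (2::real) powr (real J - 1)" by (simp add: powr_diff powr_realpow)
  then have \<mu>: "(block_threshold \<alpha> J)\<^sup>2 = 2 powr (2 * \<alpha> * (real J - 1)) / (2 * real (J + 1))\<^sup>2"
    unfolding block_threshold_def by (simp add: power_divide powr_powr powr_power mult_ac)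
  have J: "(2::real)^J = 2 powr real J" by (simp add: powr_realpow)
  have "q * s = real J * (real d * (real d + 2) - (\<alpha> - 1/2))"
    unfolding q_def s by (simp add: field_simps)
  then have exponent: "real J + real d * q - 2 * \<alpha> * (real J - 1) - q * s = 2 * \<alpha> + - (\<alpha> - 1/2) * real J"
    unfolding q_def by (simp add: algebra_simps)
  have "2 powr real J * 2 powr (real d * q) / (2 powr (2 * \<alpha> * (real J - 1)) * 2 powr (q * s))
      = 2 powr (real J + real d * q - 2 * \<alpha> * (real J - 1) - q * s)"
    by (simp add: powr_add powr_diff)
  also have "\<dots> = 2 powr (2 * \<alpha>) * 2 powr (- (\<alpha> - 1/2) * real J)"
    unfolding exponent by (rule powr_add)
  finally have powers: "2 powr real J * 2 powr (real d * q) / (2 powr (2 * \<alpha> * (real J - 1)) * 2 powr (q * s))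
      = 2 powr (2 * \<alpha>) * 2 powr (- (\<alpha> - 1/2) * real J)" .
  have "real (J + 1) * 2^J * real (grid_scale d J) ^ d / (block_threshold \<alpha> J)\<^sup>2
           * (2 * sqrt (real d) / real (grid_scale d J)) powr s
      = real (J + 1) * (2 * real (J + 1))\<^sup>2 * (2 * sqrt (real d)) powr s
          * (2 powr real J * 2 powr (real d * q) / (2 powr (2 * \<alpha> * (real J - 1)) * 2 powr (q * s)))"
    unfolding Qd Qs \<mu> J by (simp add: field_simps)
  also have "\<dots> = 4 * 2 powr (2 * \<alpha>) * (2 * sqrt (real d)) powr s * real (J + 1) ^ 3 * 2 powr (- (\<alpha> - 1/2) * real J)"
    unfolding powers by (simp add: power2_eq_square power3_eq_cube algebra_simps)
  finally show ?thesis .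
qed

lemma grid_scale_admissible:
  assumes "1 \<le> J" and "4 * pi * real d * real (J + 1) \<le> 2^J" and "0 \<le> \<alpha>"
  shows "grid_scale d J > 0
         \<and> 2^J * (2 * pi * real d * (1 / real (grid_scale d J)) * 2^(J * d)) \<le> block_threshold \<alpha> J
         \<and> 2 * real (J + 1) * block_threshold \<alpha> J \<le> (2^J / 2) powr \<alpha>"
proof -
  have "real (grid_scale d J) = 2^J * 2^(J * d) * 2^J"
    unfolding grid_scale_def by (simp flip: power_add add: algebra_simps)
  then have "2^J * (2 * pi * real d * (1 / real (grid_scale d J)) * 2^(J * d)) = 2 * pi * real d / 2^J"
    by simp
  also have "\<dots> \<le> 1 / (2 * real (J + 1))"
    using assms(2) by (simp add: field_simps)
  also have "\<dots> \<le> block_threshold \<alpha> J"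
  proof -
    have "(2::real)^1 \<le> 2^J" using assms(1) by (intro power_increasing) auto
    then have "1 \<le> (2^J / 2 :: real) powr \<alpha>" using assms(3) by (intro ge_one_powr_ge_zero) auto
    then show ?thesis unfolding block_threshold_def by (intro divide_right_mono) auto
  qed
  finally show ?thesis unfolding block_threshold_def grid_scale_def by simp
qed

lemma bad_cells_cost_le:
  assumes "d \<ge> 1" and "1 \<le> J" and s: "s = real d - (\<alpha> - 1/2) / (real d + 2)"
    and small: "4 * 2 powr (2 * \<alpha>) * (2 * sqrt (real d)) powr s * real (J + 1) ^ 3 \<le> 2 powr ((\<alpha> - 1/2) * real J / 2)"
  shows "real (card (bad_grid d (grid_scale d J) J (block_threshold \<alpha> J)))
           * (2 * sqrt (real d) / real (grid_scale d J)) powr s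
         \<le> (2 powr (- (\<alpha> - 1/2) / 2)) ^ J"
proof -
  have "block_threshold \<alpha> J > 0" unfolding block_threshold_def by simp
  moreover have "(2::nat)^J < grid_scale d J"
    unfolding grid_scale_def using assms(2) by (intro power_strict_increasing) auto
  ultimately have "real (card (bad_grid d (grid_scale d J) J (block_threshold \<alpha> J)))
           * (2 * sqrt (real d) / real (grid_scale d J)) powr s
         \<le> 4 * 2 powr (2 * \<alpha>) * (2 * sqrt (real d)) powr s * real (J + 1) ^ 3 * 2 powr (- (\<alpha> - 1/2) * real J)"
    using card_bad_grid_le[OF assms(1)] bad_cells_cost_eq[OF s, of J]
    by (metis (no_types, lifting) mult_right_mono powr_ge_zero)
  also have "\<dots> \<le> 2 powr ((\<alpha> - 1/2) * real J / 2) * 2 powr (- (\<alpha> - 1/2) * real J)"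
    using small by (rule mult_right_mono) simp
  also have "\<dots> = (2 powr (- (\<alpha> - 1/2) / 2)) ^ J"
    by (simp flip: powr_add add: powr_power) (rule arg_cong[where f = "(powr) 2"], simp add: field_simps)
  finally show ?thesis .
qed

lemma sum_le_geometric_tail:
  fixes f :: "nat \<Rightarrow> real"
  assumes "0 \<le> \<rho>" and "\<rho> < 1" and "\<And>J. f J \<le> (if J0 \<le> J then \<rho>^J else 0)"
  shows "(\<Sum>J<K. f J) \<le> \<rho>^J0 / (1 - \<rho>)"
proof -
  have "(\<Sum>J<K. f J) \<le> (\<Sum>J<K. if J0 \<le> J then \<rho>^J else 0)"
    by (intro sum_mono assms(3))
  also have "\<dots> = (\<Sum>J\<in>{J0..<K}. \<rho>^J)"
    using sum.inter_filter[of "{..<K}" "\<lambda>J. \<rho>^J" "\<lambda>J. J0 \<le> J"]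
    by (simp add: atLeastLessThan_def Collect_conj_eq Int_commute lessThan_def atLeast_def)
  also have "\<dots> = \<rho>^J0 * (\<Sum>i<K - J0. \<rho>^i)"
    by (simp add: sum.atLeastLessThan_shift_0[of _ J0] power_add sum_distrib_left atLeast0LessThan)
  also have "(\<Sum>i<K - J0. \<rho>^i) \<le> (\<Sum>i. \<rho>^i)"
    using assms by (intro sum_le_suminf summable_geometric) auto
  also have "(\<Sum>i. \<rho>^i) = 1 / (1 - \<rho>)"
    using assms by (simp add: suminf_geometric)
  finally show ?thesis using assms(1) by (simp add: mult_left_mono)
qed

lemma eventually_linear_le_power2: "\<forall>\<^sub>F J in sequentially. c * real (J + 1) \<le> (2::real)^J"
  by real_asymp

lemma eventually_cubic_le_powr2:
  "0 < \<beta> \<Longrightarrow> \<forall>\<^sub>F J in sequentially. c * real (J + 1) ^ 3 \<le> (2::real) powr (\<beta> * real J)"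
  by real_asymp

lemma eventually_divide_power2_le: "0 < \<delta> \<Longrightarrow> \<forall>\<^sub>F J in sequentially. c / (2::real)^J \<le> \<delta>"
  by real_asymp

lemma power2_le_grid_scale: "(2::real)^J \<le> real (grid_scale d J)"
  unfolding grid_scale_def by (simp add: power_increasing)

lemma covering_exponent_bounds:
  assumes "d \<ge> 1" and "1/2 < \<alpha>" and "\<alpha> < 1"
  shows "0 < real d - (\<alpha> - 1/2) / (real d + 2)" and "real d - (\<alpha> - 1/2) / (real d + 2) < real d"
proof -
  have "0 < (\<alpha> - 1/2) / (real d + 2)" and "(\<alpha> - 1/2) / (real d + 2) < 1"
    using assms by (auto simp: divide_less_eq)
  then show "0 < real d - (\<alpha> - 1/2) / (real d + 2)" and "real d - (\<alpha> - 1/2) / (real d + 2) < real d"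
    using assms(1) by linarith+
qed

lemma hausdorff_pre_E_set_le:
  assumes d: "d \<ge> 1" and \<alpha>: "1/2 < \<alpha>" "\<alpha> < 1" and "0 < \<delta>" "0 < \<epsilon>"
  shows "hausdorff_pre (euc_dist d) (real d - (\<alpha> - 1/2) / (real d + 2)) \<delta> (E_set d \<alpha>) \<le> ennreal \<epsilon>"
proof -
  define s where "s = real d - (\<alpha> - 1/2) / (real d + 2)"
  define \<rho> where "\<rho> = (2::real) powr (- (\<alpha> - 1/2) / 2)"
  define r where "r J = 2 * sqrt (real d) / real (grid_scale d J)" for J
  have "0 < s" unfolding s_def using covering_exponent_bounds[OF d \<alpha>] by blast
  have \<rho>: "0 \<le> \<rho>" "\<rho> < 1" unfolding \<rho>_def using \<alpha> by (auto intro: powr_less_one)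
  have "\<forall>\<^sub>F J in sequentially. 1 \<le> J \<and> 4 * pi * real d * real (J + 1) \<le> 2^J
      \<and> 4 * 2 powr (2 * \<alpha>) * (2 * sqrt (real d)) powr s * real (J + 1) ^ 3 \<le> 2 powr ((\<alpha> - 1/2) / 2 * real J)
      \<and> 2 * sqrt (real d) / 2^J \<le> \<delta> \<and> \<rho>^J < \<epsilon> * (1 - \<rho>)" (is "eventually ?P _")
    using \<alpha> \<rho> \<open>0 < \<delta>\<close> \<open>0 < \<epsilon>\<close>
    by (intro eventually_conj eventually_ge_at_top eventually_linear_le_power2 eventually_cubic_le_powr2
        eventually_divide_power2_le order_tendstoD(2)[OF LIMSEQ_power_zero]) auto
  then obtain J0 where J0: "\<And>J. J0 \<le> J \<Longrightarrow> ?P J"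
    unfolding eventually_sequentially by blast
  define F where "F J = {g \<in> bad_grid d (grid_scale d J) J (block_threshold \<alpha> J). J0 \<le> J}" for J
  have cost: "real (card (F J)) * r J powr s \<le> (if J0 \<le> J then \<rho>^J else 0)" for J
    using bad_cells_cost_le[OF d _ s_def] J0[of J] unfolding F_def r_def \<rho>_def by (simp add: mult_ac)
  show ?thesis
    unfolding s_def[symmetric]
  proof (rule hausdorff_pre_le_finite_covers[where F = F and U = "\<lambda>J. cell d (grid_scale d J)" and r = r])
    have "E_set d \<alpha> \<subseteq> (\<Union>J\<in>{J0..}. \<Union>g\<in>bad_grid d (grid_scale d J) J (block_threshold \<alpha> J). cell d (grid_scale d J) g)"
      using \<alpha> J0 by (intro E_set_subset_bad_cells grid_scale_admissible) auto
    then show "E_set d \<alpha> \<subseteq> (\<Union>J. \<Union>g\<in>F J. cell d (grid_scale d J) g)"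
      unfolding F_def by blast
    show "r J \<le> \<delta>" if "F J \<noteq> {}" for J
    proof -
      have "J0 \<le> J" using that unfolding F_def by blast
      have "r J \<le> 2 * sqrt (real d) / 2^J"
        unfolding r_def using power2_le_grid_scale by (intro divide_left_mono) (auto simp: grid_scale_def)
      then show ?thesis using J0[OF \<open>J0 \<le> J\<close>] by linarith
    qed
    have "\<rho>^J0 / (1 - \<rho>) \<le> \<epsilon>" using J0[of J0] \<rho> by (simp add: divide_le_eq)
    then show "(\<Sum>J<K. real (card (F J)) * r J powr s) \<le> \<epsilon>" for K
      by (rule order_trans[OF sum_le_geometric_tail[OF \<rho> cost]])
    show "euc_dist d y z \<le> r J" if "y \<in> cell d (grid_scale d J) g" "z \<in> cell d (grid_scale d J) g" for J g y z
      unfolding r_def using that by (rule euc_dist_cell_le)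
  qed (auto simp: F_def r_def euc_dist_def \<open>0 < s\<close> \<open>0 < \<delta>\<close> less_imp_le)
qed

theorem corollary1p2:
  fixes d :: nat and \<alpha> :: real
  assumes "d \<ge> 2" and "1/2 < \<alpha>" and "\<alpha> < 1"
  shows "hausdorff_dim (euc_dist d) (E_set d \<alpha>) < ereal (real d)"
proof -
  define s where "s = real d - (\<alpha> - 1/2) / (real d + 2)"
  have "0 \<le> s" "s < real d"
    using covering_exponent_bounds[of d \<alpha>] assms unfolding s_def by auto
  have "hausdorff_measure (euc_dist d) s (E_set d \<alpha>) = 0"
    unfolding s_def using assms by (intro hausdorff_measure_eq_0I hausdorff_pre_E_set_le) auto
  then have "hausdorff_dim (euc_dist d) (E_set d \<alpha>) \<le> ereal s"
    using \<open>0 \<le> s\<close> by (rule hausdorff_dim_le[rotated])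
  also have "\<dots> < ereal (real d)" using \<open>s < real d\<close> by simp
  finally show ?thesis .
qed

end
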